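(* Let $(A:B)$ be a bipartition of a set of $n$ qubits, let $\rho=|\psi\rangle\langle\psi|$ be a pure $n$-qubit state, let $\rho_A$ be its reduced state on $A$, and let $r$ be the Schmidt rank of $|\psi\rangle$ with respect to $(A:B)$. Then for any $n$-qubit Pauli string $P=P_A\otimes P_B$ (with $P_A$ labelled by $x_A$), $$p_\psi(x_A)=\frac{\mathrm{tr}(\rho_AP_A\rho_AP_A)}{2^{|A|}}\ge\frac{\mathrm{tr}(\rho P)^2}{2^{|A|}r}.$$
   Context: Pauli strings are labelled by $x\in\{0,1\}^{2n}$ via $P_x=i^{v\cdot w}(X^{v_1}Z^{w_1})\otimes\cdots\otimes(X^{v_n}Z^{w_n})$ for $x=(v_1,w_1,\dots,v_n,w_n)$, writing $x=(x_A,x_B)$ for the pairs $(v_i,w_i)$ belonging to qubits in $A$ and in $B$, so that $P_x=P_{x_A}\otimes P_{x_B}$. The Pauli distribution of a pure state is $p_\psi(x)=\mathrm{tr}(\psi P_x)^2/2^n$, and its marginal is $p_\psi(x_A)=\sum_{x_B}p_\psi(x_A,x_B)$. *)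

theory Defs
  imports Complex_Main
begin

text \<open>Qubits are labelled 0..n-1. A computational basis state on a set S of qubits is
  encoded by the subset s of S of qubits in state 1. A pure state is an amplitude
  function psi on subsets of {..<n}. A Pauli label x=(v,w) in {0,1}^(2n) is encoded by
  the pair of sets V = {i. v_i = 1}, W = {i. w_i = 1}.\<close>

type_synonym qstate = "nat set \<Rightarrow> complex"

text \<open>Matrix element <t| P_(V,W) |s> of P = i^(v.w) X^v Z^w:
  Z^w |s> = (-1)^(w.s) |s>, X^v |s> = |s xor v>.\<close>
definition pauli_elem :: "nat set \<Rightarrow> nat set \<Rightarrow> nat set \<Rightarrow> nat set \<Rightarrow> complex" where
  "pauli_elem V W t s =
     (if t = (s - V) \<union> (V - s) then \<i> ^ card (V \<inter> W) * (-1) ^ card (W \<inter> s) else 0)"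

definition pauli_expect :: "nat set \<Rightarrow> qstate \<Rightarrow> nat set \<Rightarrow> nat set \<Rightarrow> complex" where
  "pauli_expect Q psi V W =
     (\<Sum>t\<in>Pow Q. \<Sum>s\<in>Pow Q. cnj (psi t) * pauli_elem V W t s * psi s)"

text \<open>Pauli distribution p_psi(x) = tr(psi P_x)^2 / 2^n (the trace is real).\<close>
definition pauli_dist :: "nat \<Rightarrow> qstate \<Rightarrow> nat set \<Rightarrow> nat set \<Rightarrow> real" where
  "pauli_dist n psi V W = (Re (pauli_expect {..<n} psi V W))\<^sup>2 / 2 ^ n"

definition pauli_marginal :: "nat \<Rightarrow> nat set \<Rightarrow> qstate \<Rightarrow> nat set \<Rightarrow> nat set \<Rightarrow> real" where
  "pauli_marginal n A psi VA WA =
     (\<Sum>(VB, WB)\<in>Pow ({..<n} - A) \<times> Pow ({..<n} - A). pauli_dist n psi (VA \<union> VB) (WA \<union> WB))"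

definition reduced_state :: "nat \<Rightarrow> nat set \<Rightarrow> qstate \<Rightarrow> nat set \<Rightarrow> nat set \<Rightarrow> complex" where
  "reduced_state n A psi a a' =
     (\<Sum>b\<in>Pow ({..<n} - A). psi (a \<union> b) * cnj (psi (a' \<union> b)))"

definition tr_rPrP :: "nat \<Rightarrow> nat set \<Rightarrow> qstate \<Rightarrow> nat set \<Rightarrow> nat set \<Rightarrow> complex" where
  "tr_rPrP n A psi VA WA =
     (\<Sum>a1\<in>Pow A. \<Sum>a2\<in>Pow A. \<Sum>a3\<in>Pow A. \<Sum>a4\<in>Pow A.
        reduced_state n A psi a1 a2 * pauli_elem VA WA a2 a3 *
        reduced_state n A psi a3 a4 * pauli_elem VA WA a4 a1)"

definition schmidt_rank :: "nat \<Rightarrow> nat set \<Rightarrow> qstate \<Rightarrow> nat" where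
  "schmidt_rank n A psi =
     (LEAST r. \<exists>f g :: nat \<Rightarrow> nat set \<Rightarrow> complex.
        \<forall>a\<in>Pow A. \<forall>b\<in>Pow ({..<n} - A). psi (a \<union> b) = (\<Sum>i<r. f i a * g i b))"

end

theory Submission
  imports Defs "HOL-Analysis.Convex"
begin

(* Write psi (a \<union> b) = (\<Sum>i<r. f i a * g i b) with the g i orthonormal on the B side and r at
   most the Schmidt rank (Gram-Schmidt applied to a shortest decomposition). With
   M i j = <f i| P_A |f j> and N i j = <g i| P_B |g j> one gets tr (rho P) = (\<Sum>i j. M i j * N i j) and
   tr (rho_A P_A rho_A P_A) = (\<Sum>i j. M i j * M j i) = (\<Sum>i j. |M i j|^2).
   Summing tr (rho (P_A \<otimes> P_B))^2 over all P_B and using the completeness relation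
   (\<Sum>P_B. <t|P_B|s> <t'|P_B|s'>) = 2^|B| [t = s'] [t' = s] gives the formula for the marginal.
   Cauchy-Schwarz over the r^2 pairs (i, j), together with Bessel's inequality
   (\<Sum>i. |N i j|^2) \<le> |P_B g j|^2 = 1, gives tr (rho P)^2 \<le> r * (\<Sum>i j. |M i j|^2). *)

lemma sum_Pow_Un:
  assumes "A \<inter> B = {}"
  shows "(\<Sum>s\<in>Pow (A \<union> B). h s) = (\<Sum>a\<in>Pow A. \<Sum>b\<in>Pow B. h (a \<union> b))"
proof -
  have "(\<Sum>a\<in>Pow A. \<Sum>b\<in>Pow B. h (a \<union> b)) = (\<Sum>(a, b)\<in>Pow A \<times> Pow B. h (a \<union> b))"
    by (rule sum.cartesian_product)
  also have "\<dots> = (\<Sum>s\<in>Pow (A \<union> B). h s)"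
    by (rule sum.reindex_bij_witness[where i="\<lambda>s. (s \<inter> A, s \<inter> B)" and j="\<lambda>(a, b). a \<union> b"])
       (use assms in auto)
  finally show ?thesis by simp
qed

lemma sum_sum_delta:
  assumes "finite S" "finite T" "a \<in> S" "b \<in> T"
  shows "(\<Sum>x\<in>S. \<Sum>y\<in>T. if x = a \<and> y = b then F x y else 0) = F a b"
proof -
  have "(\<Sum>y\<in>T. if x = a \<and> y = b then F x y else 0) = (if x = a then F x b else 0)" for x
    using assms by (cases "x = a") simp_all
  then show ?thesis using assms by simp
qed

lemma cmod_sum_mult_squared_le:
  fixes x y :: "'i \<Rightarrow> complex"
  shows "(cmod (\<Sum>i\<in>I. x i * y i))\<^sup>2 \<le> (\<Sum>i\<in>I. (cmod (x i))\<^sup>2) * (\<Sum>i\<in>I. (cmod (y i))\<^sup>2)"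
proof -
  have "cmod (\<Sum>i\<in>I. x i * y i) \<le> (\<Sum>i\<in>I. cmod (x i) * cmod (y i))"
    by (rule order_trans[OF norm_sum]) (simp add: norm_mult)
  then have "(cmod (\<Sum>i\<in>I. x i * y i))\<^sup>2 \<le> (\<Sum>i\<in>I. cmod (x i) * cmod (y i))\<^sup>2"
    by (intro power_mono) auto
  also have "\<dots> \<le> (\<Sum>i\<in>I. (cmod (x i))\<^sup>2) * (\<Sum>i\<in>I. (cmod (y i))\<^sup>2)"
    by (rule Cauchy_Schwarz_ineq_sum)
  finally show ?thesis .
qed

lemma divide_mult_le_divide:
  fixes x t c :: real and r R :: nat
  assumes "x \<le> r * t" "r \<le> R" "0 \<le> t" "0 < c"
  shows "x / (c * R) \<le> t / c"
proof (cases "R = 0")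
  case False
  have "x \<le> R * t" using assms by (meson mult_right_mono of_nat_le_iff order_trans)
  then show ?thesis using False assms(4) by (simp add: field_simps)
qed (use assms in simp)

section \<open>Orthonormal families of functions on a finite set\<close>

definition inner_on :: "'a set \<Rightarrow> ('a \<Rightarrow> complex) \<Rightarrow> ('a \<Rightarrow> complex) \<Rightarrow> complex" where
  "inner_on S u v = (\<Sum>b\<in>S. u b * cnj (v b))"

definition orthonormal_on :: "'a set \<Rightarrow> nat \<Rightarrow> (nat \<Rightarrow> 'a \<Rightarrow> complex) \<Rightarrow> bool" where
  "orthonormal_on S r g \<longleftrightarrow> (\<forall>i<r. \<forall>j<r. inner_on S (g i) (g j) = (if i = j then 1 else 0))"

lemma inner_on_commute: "inner_on S v u = cnj (inner_on S u v)"
  unfolding inner_on_def by (simp add: mult.commute)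

lemma inner_on_self: "inner_on S u u = of_real (\<Sum>b\<in>S. (cmod (u b))\<^sup>2)"
  unfolding inner_on_def of_real_sum by (simp only: complex_norm_square)

lemma inner_on_diff_left: "inner_on S (\<lambda>b. u b - u' b) v = inner_on S u v - inner_on S u' v"
  unfolding inner_on_def by (simp add: algebra_simps sum_subtractf)

lemma inner_on_diff_right: "inner_on S u (\<lambda>b. v b - v' b) = inner_on S u v - inner_on S u v'"
  unfolding inner_on_def by (simp add: algebra_simps sum_subtractf)

lemma inner_on_sum_left:
  "inner_on S (\<lambda>b. \<Sum>j\<in>J. c j * w j b) v = (\<Sum>j\<in>J. c j * inner_on S (w j) v)"
  unfolding inner_on_def
  by (simp add: sum_distrib_left sum_distrib_right mult.assoc sum.swap[of _ S])

lemma inner_on_sum_right: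
  "inner_on S u (\<lambda>b. \<Sum>j\<in>J. c j * w j b) = (\<Sum>j\<in>J. cnj (c j) * inner_on S u (w j))"
  unfolding inner_on_def
  by (simp add: sum_distrib_left sum_distrib_right algebra_simps sum.swap[of _ S])

lemma inner_on_divide_left: "inner_on S (\<lambda>b. u b / c) v = inner_on S u v / c"
  unfolding inner_on_def by (simp add: sum_divide_distrib)

lemma inner_on_divide_right: "inner_on S u (\<lambda>b. v b / c) = inner_on S u v / cnj c"
  unfolding inner_on_def by (simp add: sum_divide_distrib)

lemma orthonormal_on_Suc:
  "orthonormal_on S (Suc r) g \<longleftrightarrow> orthonormal_on S r g \<and>
     (\<forall>k<r. inner_on S (g r) (g k) = 0) \<and> inner_on S (g r) (g r) = 1"
proof -
  have "inner_on S (g k) (g r) = 0 \<longleftrightarrow> inner_on S (g r) (g k) = 0" for k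
    by (subst inner_on_commute) simp
  then show ?thesis
    unfolding orthonormal_on_def All_less_Suc by auto
qed

lemma orthonormal_on_fun_upd: "orthonormal_on S r (g(r := h)) \<longleftrightarrow> orthonormal_on S r g"
  unfolding orthonormal_on_def by auto

lemma orthonormal_on_sum_norm:
  assumes "orthonormal_on S r g" "j < r"
  shows "(\<Sum>b\<in>S. (cmod (g j b))\<^sup>2) = 1"
proof -
  have "inner_on S (g j) (g j) = 1" using assms unfolding orthonormal_on_def by simp
  then show ?thesis by (simp only: inner_on_self of_real_eq_1_iff)
qed

lemma orthonormal_on_sum_inner_left:
  assumes "orthonormal_on S r g" "k < r"
  shows "(\<Sum>j<r. c j * inner_on S (g j) (g k)) = c k"
proof -
  have "(\<Sum>j<r. c j * inner_on S (g j) (g k)) = (\<Sum>j<r. if j = k then c k else 0)"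
    by (rule sum.cong) (use assms in \<open>auto simp: orthonormal_on_def\<close>)
  then show ?thesis using assms(2) by simp
qed

lemma orthonormal_on_sum_inner_right:
  assumes "orthonormal_on S r g" "k < r"
  shows "(\<Sum>j<r. c j * inner_on S (g k) (g j)) = c k"
proof -
  have "(\<Sum>j<r. c j * inner_on S (g k) (g j)) = (\<Sum>j<r. if j = k then c k else 0)"
    by (rule sum.cong) (use assms in \<open>auto simp: orthonormal_on_def\<close>)
  then show ?thesis using assms(2) by simp
qed

lemma inner_on_residual_orthogonal:
  assumes "orthonormal_on S r g" "k < r"
  shows "inner_on S (\<lambda>b. v b - (\<Sum>j<r. inner_on S v (g j) * g j b)) (g k) = 0"
  using orthonormal_on_sum_inner_left[OF assms]
  by (simp add: inner_on_diff_left inner_on_sum_left)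

lemma bessel_inequality:
  assumes "orthonormal_on S r g"
  shows "(\<Sum>j<r. (cmod (inner_on S u (g j)))\<^sup>2) \<le> (\<Sum>b\<in>S. (cmod (u b))\<^sup>2)"
proof -
  define c where "c j = inner_on S u (g j)" for j
  define w where "w = (\<lambda>b. u b - (\<Sum>j<r. c j * g j b))"
  have w_orth: "inner_on S w (g k) = 0" if "k < r" for k
    unfolding w_def c_def by (rule inner_on_residual_orthogonal[OF assms that])
  have c_cnj: "inner_on S (g j) u = cnj (c j)" for j
    unfolding c_def by (rule inner_on_commute)
  have "inner_on S w w = inner_on S w (\<lambda>b. u b - (\<Sum>j<r. c j * g j b))"
    unfolding w_def by (rule refl)
  also have "\<dots> = inner_on S w u"
    by (simp add: inner_on_diff_right inner_on_sum_right w_orth)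
  also have "\<dots> = inner_on S u u - (\<Sum>j<r. c j * cnj (c j))"
    by (simp add: w_def inner_on_diff_left inner_on_sum_left c_cnj)
  also have "\<dots> = of_real ((\<Sum>b\<in>S. (cmod (u b))\<^sup>2) - (\<Sum>j<r. (cmod (c j))\<^sup>2))"
    by (simp only: inner_on_self of_real_diff of_real_sum complex_norm_square)
  finally have "(\<Sum>b\<in>S. (cmod (u b))\<^sup>2) - (\<Sum>j<r. (cmod (c j))\<^sup>2) = (\<Sum>b\<in>S. (cmod (w b))\<^sup>2)"
    by (simp only: inner_on_self of_real_eq_iff)
  moreover have "(\<Sum>b\<in>S. (cmod (w b))\<^sup>2) \<ge> 0" by (simp add: sum_nonneg)
  ultimately show ?thesis by (simp add: c_def)
qed

lemma orthonormal_on_extend: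
  assumes "finite S" "orthonormal_on S r g"
  obtains c where "\<forall>b\<in>S. v b = (\<Sum>j<r. c j * g j b)"
  | c s h where "orthonormal_on S (Suc r) (g(r := h))"
      "\<forall>b\<in>S. v b = (\<Sum>j<r. c j * g j b) + s * h b"
proof -
  define c where "c j = inner_on S v (g j)" for j
  define u where "u = (\<lambda>b. v b - (\<Sum>j<r. c j * g j b))"
  have u_orth: "inner_on S u (g k) = 0" if "k < r" for k
    unfolding u_def c_def by (rule inner_on_residual_orthogonal[OF assms(2) that])
  have v_eq: "v b = (\<Sum>j<r. c j * g j b) + u b" for b
    by (simp add: u_def)
  define s where "s = sqrt (\<Sum>b\<in>S. (cmod (u b))\<^sup>2)"
  show thesis
  proof (cases "s = 0")
    case True
    then have "u b = 0" if "b \<in> S" for b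
      using assms(1) that by (simp add: s_def sum_nonneg_eq_0_iff)
    then show thesis using v_eq by (intro that(1)[of c]) simp
  next
    case False
    define h where "h = (\<lambda>b. u b / of_real s)"
    have "inner_on S u u = of_real (s * s)"
      by (simp add: inner_on_self s_def sum_nonneg)
    then have "inner_on S h h = 1"
      using False by (simp add: h_def inner_on_divide_left inner_on_divide_right)
    moreover have "inner_on S h (g k) = 0" if "k < r" for k
      using u_orth[OF that] by (simp add: h_def inner_on_divide_left)
    ultimately have "orthonormal_on S (Suc r) (g(r := h))"
      using assms(2) by (simp add: orthonormal_on_Suc orthonormal_on_fun_upd)
    moreover have "v b = (\<Sum>j<r. c j * g j b) + of_real s * h b" for b
      using False by (simp add: v_eq h_def)
    ultimately show thesis by (intro that(2)) auto
  qed
qed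

lemma orthonormal_product_decomposition:
  assumes "finite S"
  shows "\<exists>r' f' g'. r' \<le> r \<and> orthonormal_on S r' g' \<and>
           (\<forall>a. \<forall>b\<in>S. (\<Sum>i<r. f i a * g i b) = (\<Sum>i<r'. f' i a * g' i b))"
proof (induction r)
  case 0
  show ?case by (intro exI[of _ 0]) (simp add: orthonormal_on_def)
next
  case (Suc r)
  then obtain r' f' g' where "r' \<le> r" and on: "orthonormal_on S r' g'"
    and dec: "\<forall>a. \<forall>b\<in>S. (\<Sum>i<r. f i a * g i b) = (\<Sum>i<r'. f' i a * g' i b)"
    by blast
  have step: "(\<Sum>i<Suc r. f i a * g i b) = (\<Sum>j<r'. f' j a * g' j b) + f r a * g r b"
    if "b \<in> S" for a b
    using dec that by simp
  define f'' where "f'' c j a = f' j a + f r a * c j" for c j a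
  show ?case
  proof (rule orthonormal_on_extend[OF assms on, of "g r"])
    fix c assume v: "\<forall>b\<in>S. g r b = (\<Sum>j<r'. c j * g' j b)"
    have "(\<Sum>i<Suc r. f i a * g i b) = (\<Sum>j<r'. f'' c j a * g' j b)" if "b \<in> S" for a b
      using step[OF that] v that by (simp add: f''_def algebra_simps sum.distrib sum_distrib_left)
    then show ?case using \<open>r' \<le> r\<close> on by (intro exI[of _ r'] exI[of _ "f'' c"] exI[of _ g']) auto
  next
    fix c s h
    assume on': "orthonormal_on S (Suc r') (g'(r' := h))"
      and v: "\<forall>b\<in>S. g r b = (\<Sum>j<r'. c j * g' j b) + s * h b"
    define f3 where "f3 = (f'' c)(r' := (\<lambda>a. f r a * s))"
    have f3_lower: "(\<Sum>j<r'. f3 j a * (g'(r' := h)) j b) = (\<Sum>j<r'. f'' c j a * g' j b)" for a b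
      by (rule sum.cong) (auto simp: f3_def)
    have "(\<Sum>i<Suc r. f i a * g i b) = (\<Sum>j<Suc r'. f3 j a * (g'(r' := h)) j b)"
      if "b \<in> S" for a b
      using step[OF that] v that
      by (simp add: f3_lower f3_def f''_def algebra_simps sum.distrib sum_distrib_left)
    moreover have "Suc r' \<le> Suc r" using \<open>r' \<le> r\<close> by simp
    ultimately show ?case using on' by blast
  qed
qed

section \<open>Schmidt decompositions\<close>

lemma product_decomposition_exists:
  fixes psi :: "'a set \<Rightarrow> complex"
  assumes "finite A"
  shows "\<exists>(r::nat) f g. \<forall>a\<in>Pow A. \<forall>b. psi (a \<union> b) = (\<Sum>i<r. f i a * g i b)"
proof -
  obtain h where h: "bij_betw h {..<card (Pow A)} (Pow A)"
    using ex_bij_betw_nat_finite[of "Pow A"] assms by (auto simp: atLeast0LessThan)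
  define f where "f i a = (if h i = a then 1 else 0 :: complex)" for i a
  define g where "g i b = psi (h i \<union> b)" for i b
  have "psi (a \<union> b) = (\<Sum>i<card (Pow A). f i a * g i b)" if "a \<in> Pow A" for a b
  proof -
    have "(\<Sum>i<card (Pow A). f i a * g i b) = (\<Sum>i<card (Pow A). (\<lambda>a'. if a' = a then psi (a' \<union> b) else 0) (h i))"
      unfolding f_def g_def by (rule sum.cong) simp_all
    also have "\<dots> = (\<Sum>a'\<in>Pow A. if a' = a then psi (a' \<union> b) else 0)"
      by (rule sum.reindex_bij_betw[OF h])
    also have "\<dots> = psi (a \<union> b)" using that assms by simp
    finally show ?thesis by simp
  qed
  then show ?thesis by (intro exI[of _ "card (Pow A)"] exI[of _ f] exI[of _ g]) simp
qed

lemma schmidt_rank_orthonormal_decomposition: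
  assumes "A \<subseteq> {..<n}"
  obtains r f g where "r \<le> schmidt_rank n A psi" "orthonormal_on (Pow ({..<n} - A)) r g"
    "\<forall>a\<in>Pow A. \<forall>b\<in>Pow ({..<n} - A). psi (a \<union> b) = (\<Sum>i<r. f i a * g i b)"
proof -
  let ?B = "{..<n} - A"
  have "finite A" using assms finite_subset by blast
  then have "\<exists>r f g :: nat \<Rightarrow> nat set \<Rightarrow> complex.
      \<forall>a\<in>Pow A. \<forall>b\<in>Pow ?B. psi (a \<union> b) = (\<Sum>i<r. f i a * g i b)"
    using product_decomposition_exists[of A psi] by blast
  then have "\<exists>f g :: nat \<Rightarrow> nat set \<Rightarrow> complex.
      \<forall>a\<in>Pow A. \<forall>b\<in>Pow ?B. psi (a \<union> b) = (\<Sum>i<schmidt_rank n A psi. f i a * g i b)"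
    unfolding schmidt_rank_def by (rule LeastI_ex)
  then obtain f0 g0 :: "nat \<Rightarrow> nat set \<Rightarrow> complex"
    where decomp0: "\<forall>a\<in>Pow A. \<forall>b\<in>Pow ?B. psi (a \<union> b) = (\<Sum>i<schmidt_rank n A psi. f0 i a * g0 i b)"
    by blast
  obtain r f g where "r \<le> schmidt_rank n A psi" "orthonormal_on (Pow ?B) r g"
    "\<forall>a. \<forall>b\<in>Pow ?B. (\<Sum>i<schmidt_rank n A psi. f0 i a * g0 i b) = (\<Sum>i<r. f i a * g i b)"
    using orthonormal_product_decomposition[of "Pow ?B" "schmidt_rank n A psi" f0 g0] by auto
  with decomp0 show thesis by (intro that[of r g f]) auto
qed

section \<open>Matrix elements of Pauli strings\<close>

lemma sym_diff_eq_iff: "t = sym_diff s V \<longleftrightarrow> s = sym_diff t V"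
  by auto

lemma card_sym_diff:
  assumes "finite X" "finite Y"
  shows "card (sym_diff X Y) + 2 * card (X \<inter> Y) = card X + card Y"
proof -
  have "sym_diff X Y = (X \<union> Y) - (X \<inter> Y)" by blast
  then have "card (sym_diff X Y) = card (X \<union> Y) - card (X \<inter> Y)"
    using assms by (simp add: card_Diff_subset Int_Un_eq(3) inf.coboundedI1)
  moreover have "card (X \<inter> Y) \<le> card (X \<union> Y)" using assms by (intro card_mono) auto
  ultimately show ?thesis using card_Un_Int[OF assms] by linarith
qed

lemma neg_one_power_card_Int_sym_diff:
  assumes "finite W"
  shows "(-1::'a::comm_ring_1) ^ card (W \<inter> X) * (-1) ^ card (W \<inter> Y) = (-1) ^ card (W \<inter> sym_diff X Y)"
proof -
  have "W \<inter> sym_diff X Y = sym_diff (W \<inter> X) (W \<inter> Y)" by blast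
  then have card_eq: "card (W \<inter> X) + card (W \<inter> Y)
      = card (W \<inter> sym_diff X Y) + 2 * card (W \<inter> X \<inter> (W \<inter> Y))"
    using card_sym_diff[of "W \<inter> X" "W \<inter> Y"] assms by simp
  have "(-1::'a) ^ card (W \<inter> X) * (-1) ^ card (W \<inter> Y) = (-1) ^ (card (W \<inter> X) + card (W \<inter> Y))"
    by (simp add: power_add)
  also have "\<dots> = (-1) ^ card (W \<inter> sym_diff X Y)"
    unfolding card_eq by (simp add: power_add power_mult)
  finally show ?thesis .
qed

lemma sum_Pow_neg_one_power_card_Int:
  assumes "finite B" "X \<subseteq> B"
  shows "(\<Sum>W\<in>Pow B. (-1::complex) ^ card (X \<inter> W)) = (if X = {} then 2 ^ card B else 0)"
proof (cases "X = {}")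
  case True
  then show ?thesis using assms by (simp add: card_Pow)
next
  case False
  then obtain x where x: "x \<in> X" by blast
  let ?\<chi> = "\<lambda>W. (-1::complex) ^ card (X \<inter> W)"
  have flip: "?\<chi> (sym_diff W {x}) = - ?\<chi> W" for W
    using neg_one_power_card_Int_sym_diff[of X W "{x}", where 'a=complex] assms x
    by (simp add: finite_subset insert_absorb)
  have "x \<in> B" using x assms(2) by blast
  then have "bij_betw (\<lambda>W. sym_diff W {x}) (Pow B) (Pow B)"
    by (intro bij_betwI[where g="\<lambda>W. sym_diff W {x}"]) blast+
  then have "(\<Sum>W\<in>Pow B. ?\<chi> W) = (\<Sum>W\<in>Pow B. ?\<chi> (sym_diff W {x}))"
    by (rule sum.reindex_bij_betw[symmetric])
  also have "\<dots> = - (\<Sum>W\<in>Pow B. ?\<chi> W)" by (simp add: flip sum_negf)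
  finally show ?thesis using False by simp
qed

lemma card_Un_Int_Un_disjoint:
  assumes "A \<inter> B = {}" "X \<subseteq> A" "X' \<subseteq> A" "Y \<subseteq> B" "Y' \<subseteq> B" "finite A" "finite B"
  shows "card ((X \<union> Y) \<inter> (X' \<union> Y')) = card (X \<inter> X') + card (Y \<inter> Y')"
proof -
  have "(X \<union> Y) \<inter> (X' \<union> Y') = (X \<inter> X') \<union> (Y \<inter> Y')" using assms by blast
  moreover have "finite (X \<inter> X')" "finite (Y \<inter> Y')"
    using assms by (meson finite_Int finite_subset)+
  moreover have "(X \<inter> X') \<inter> (Y \<inter> Y') = {}" using assms by blast
  ultimately show ?thesis by (simp add: card_Un_disjoint)
qed

lemma pauli_elem_Un:
  assumes "A \<inter> B = {}" "finite A" "finite B"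
    and "VA \<subseteq> A" "WA \<subseteq> A" "a \<subseteq> A" "a' \<subseteq> A"
    and "VB \<subseteq> B" "WB \<subseteq> B" "b \<subseteq> B" "b' \<subseteq> B"
  shows "pauli_elem (VA \<union> VB) (WA \<union> WB) (a \<union> b) (a' \<union> b')
       = pauli_elem VA WA a a' * pauli_elem VB WB b b'"
proof -
  have "sym_diff (a' \<union> b') (VA \<union> VB) = sym_diff a' VA \<union> sym_diff b' VB"
    using assms by blast
  moreover have "a \<union> b = X \<union> Y \<longleftrightarrow> a = X \<and> b = Y" if "X \<subseteq> A" "Y \<subseteq> B" for X Y
    using assms that by blast
  moreover have "sym_diff a' VA \<subseteq> A" "sym_diff b' VB \<subseteq> B"
    using assms by blast+
  ultimately have "a \<union> b = sym_diff (a' \<union> b') (VA \<union> VB) \<longleftrightarrow> a = sym_diff a' VA \<and> b = sym_diff b' VB"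
    by simp
  moreover have "card ((VA \<union> VB) \<inter> (WA \<union> WB)) = card (VA \<inter> WA) + card (VB \<inter> WB)"
    and "card ((WA \<union> WB) \<inter> (a' \<union> b')) = card (WA \<inter> a') + card (WB \<inter> b')"
    using assms by (simp_all add: card_Un_Int_Un_disjoint[of A B])
  ultimately show ?thesis by (simp add: pauli_elem_def power_add)
qed

lemma cnj_pauli_elem:
  assumes "finite W"
  shows "cnj (pauli_elem V W t s) = pauli_elem V W s t"
proof (cases "t = sym_diff s V")
  case True
  then have s: "s = sym_diff t V" by (rule sym_diff_eq_iff[THEN iffD1])
  define k where "k = card (V \<inter> W)"
  have sign: "(-1::complex) ^ k * (-1) ^ card (W \<inter> s) = (-1) ^ card (W \<inter> t)"
    using neg_one_power_card_Int_sym_diff[OF assms, of V s] True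
    by (simp add: k_def Int_commute[of V W] Un_commute)
  have cnj_i: "cnj (\<i> ^ k) = (-1) ^ k * \<i> ^ k"
    by (simp flip: power_mult_distrib)
  have "cnj (pauli_elem V W t s) = cnj (\<i> ^ k) * (-1) ^ card (W \<inter> s)"
    using True by (simp add: pauli_elem_def k_def)
  also have "\<dots> = \<i> ^ k * ((-1) ^ k * (-1) ^ card (W \<inter> s))"
    unfolding cnj_i by (simp only: mult_ac)
  also have "\<dots> = pauli_elem V W s t"
    unfolding sign using s by (simp add: pauli_elem_def k_def)
  finally show ?thesis .
next
  case False
  then have "s \<noteq> sym_diff t V" by (metis sym_diff_eq_iff)
  then show ?thesis using False by (simp add: pauli_elem_def)
qed

lemma pauli_elem_mult_pauli_elem:
  assumes "finite W"
  shows "pauli_elem V W t1 s1 * pauli_elem V W t2 s2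
       = (if t1 = sym_diff s1 V \<and> t2 = sym_diff s2 V
          then (-1) ^ card (W \<inter> sym_diff V (sym_diff s1 s2)) else 0)"
proof (cases "t1 = sym_diff s1 V \<and> t2 = sym_diff s2 V")
  case True
  have "\<i> ^ card (V \<inter> W) * \<i> ^ card (V \<inter> W) = (-1::complex) ^ card (W \<inter> V)"
    by (simp add: Int_commute flip: power_mult_distrib)
  then have "pauli_elem V W t1 s1 * pauli_elem V W t2 s2
      = (-1) ^ card (W \<inter> V) * ((-1) ^ card (W \<inter> s1) * (-1) ^ card (W \<inter> s2))"
    using True by (simp add: pauli_elem_def mult_ac)
  also have "\<dots> = (-1) ^ card (W \<inter> V) * (-1) ^ card (W \<inter> sym_diff s1 s2)"
    by (simp add: neg_one_power_card_Int_sym_diff[OF assms])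
  also have "\<dots> = (-1) ^ card (W \<inter> sym_diff V (sym_diff s1 s2))"
    by (rule neg_one_power_card_Int_sym_diff[OF assms])
  finally show ?thesis using True by simp
next
  case False
  then show ?thesis by (auto simp: pauli_elem_def)
qed

lemma sum_pauli_elem_mult_pauli_elem:
  assumes "finite B" "t1 \<subseteq> B" "s1 \<subseteq> B" "t2 \<subseteq> B" "s2 \<subseteq> B"
  shows "(\<Sum>(V, W)\<in>Pow B \<times> Pow B. pauli_elem V W t1 s1 * pauli_elem V W t2 s2)
       = (if t1 = s2 \<and> t2 = s1 then 2 ^ card B else 0)"
proof -
  define V0 where "V0 = sym_diff t1 s1"
  define X where "X = sym_diff V0 (sym_diff s1 s2)"
  have "V0 \<in> Pow B" "X \<subseteq> B" using assms by (auto simp: V0_def X_def)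
  have sum_over_W: "(\<Sum>W\<in>Pow B. pauli_elem V W t1 s1 * pauli_elem V W t2 s2)
      = (if V = V0 then (if t2 = sym_diff s2 V0 then \<Sum>W\<in>Pow B. (-1) ^ card (X \<inter> W) else 0) else 0)"
    for V
  proof -
    have "pauli_elem V W t1 s1 * pauli_elem V W t2 s2
        = (if V = V0 \<and> t2 = sym_diff s2 V0 then (-1) ^ card (X \<inter> W) else 0)" if "W \<in> Pow B" for W
    proof -
      have "t1 = sym_diff s1 V \<longleftrightarrow> V = V0" unfolding V0_def by auto
      moreover have "finite W" using that assms(1) by (auto intro: finite_subset)
      ultimately show ?thesis by (auto simp: pauli_elem_mult_pauli_elem X_def Int_commute)
    qed
    then have "(\<Sum>W\<in>Pow B. pauli_elem V W t1 s1 * pauli_elem V W t2 s2)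
        = (\<Sum>W\<in>Pow B. if V = V0 \<and> t2 = sym_diff s2 V0 then (-1) ^ card (X \<inter> W) else 0)"
      by (rule sum.cong[OF refl])
    then show ?thesis by simp
  qed
  have "(\<Sum>(V, W)\<in>Pow B \<times> Pow B. pauli_elem V W t1 s1 * pauli_elem V W t2 s2)
      = (\<Sum>V\<in>Pow B. \<Sum>W\<in>Pow B. pauli_elem V W t1 s1 * pauli_elem V W t2 s2)"
    by (rule sum.cartesian_product[symmetric])
  also have "\<dots> = (if t2 = sym_diff s2 V0 then \<Sum>W\<in>Pow B. (-1) ^ card (X \<inter> W) else 0)"
    unfolding sum_over_W using \<open>V0 \<in> Pow B\<close> assms(1) by simp
  also have "\<dots> = (if t2 = sym_diff s2 V0 \<and> X = {} then 2 ^ card B else 0)"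
    using sum_Pow_neg_one_power_card_Int[OF assms(1) \<open>X \<subseteq> B\<close>] assms(1) by (simp add: card_Pow)
  also have "t2 = sym_diff s2 V0 \<and> X = {} \<longleftrightarrow> t1 = s2 \<and> t2 = s1"
    unfolding X_def V0_def by auto
  finally show ?thesis .
qed

lemma sum_pauli_elem_mult:
  assumes "finite B" "V \<subseteq> B" "t \<subseteq> B"
  shows "(\<Sum>s\<in>Pow B. pauli_elem V W t s * u s)
       = \<i> ^ card (V \<inter> W) * (-1) ^ card (W \<inter> sym_diff t V) * u (sym_diff t V)"
proof -
  have "(\<Sum>s\<in>Pow B. pauli_elem V W t s * u s)
      = (\<Sum>s\<in>Pow B. if s = sym_diff t V then \<i> ^ card (V \<inter> W) * (-1) ^ card (W \<inter> s) * u s else 0)"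
    by (rule sum.cong) (auto simp: pauli_elem_def)
  also have "\<dots> = \<i> ^ card (V \<inter> W) * (-1) ^ card (W \<inter> sym_diff t V) * u (sym_diff t V)"
    using assms by auto
  finally show ?thesis .
qed

lemma sum_norm_pauli_elem_mult:
  assumes "finite B" "V \<subseteq> B"
  shows "(\<Sum>t\<in>Pow B. (cmod (\<Sum>s\<in>Pow B. pauli_elem V W t s * u s))\<^sup>2) = (\<Sum>t\<in>Pow B. (cmod (u t))\<^sup>2)"
proof -
  have "bij_betw (\<lambda>t. sym_diff t V) (Pow B) (Pow B)"
    using assms(2) by (intro bij_betwI[where g="\<lambda>t. sym_diff t V"]) auto
  then have "(\<Sum>t\<in>Pow B. (cmod (u (sym_diff t V)))\<^sup>2) = (\<Sum>t\<in>Pow B. (cmod (u t))\<^sup>2)"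
    by (rule sum.reindex_bij_betw)
  then show ?thesis
    using assms by (simp add: sum_pauli_elem_mult norm_mult norm_power)
qed

definition pauli_form :: "nat set \<Rightarrow> nat set \<Rightarrow> nat set \<Rightarrow> qstate \<Rightarrow> qstate \<Rightarrow> complex" where
  "pauli_form Q V W u v = (\<Sum>t\<in>Pow Q. \<Sum>s\<in>Pow Q. cnj (u t) * pauli_elem V W t s * v s)"

lemma pauli_expect_eq_pauli_form: "pauli_expect Q psi V W = pauli_form Q V W psi psi"
  unfolding pauli_expect_def pauli_form_def ..

lemma cnj_pauli_form:
  assumes "finite W"
  shows "cnj (pauli_form Q V W u v) = pauli_form Q V W v u"
  unfolding pauli_form_def by (simp add: cnj_pauli_elem[OF assms] algebra_simps) (rule sum.swap)

lemma pauli_expect_real: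
  assumes "finite W"
  shows "pauli_expect Q psi V W \<in> \<real>"
  unfolding Reals_cnj_iff pauli_expect_eq_pauli_form by (rule cnj_pauli_form[OF assms])

lemma pauli_form_eq_inner_on:
  "pauli_form Q V W u v = inner_on (Pow Q) (\<lambda>t. \<Sum>s\<in>Pow Q. pauli_elem V W t s * v s) u"
  unfolding pauli_form_def inner_on_def by (simp add: sum_distrib_left mult_ac)

lemma sum_norm_pauli_form_le:
  assumes "finite B" "V \<subseteq> B" "orthonormal_on (Pow B) r g"
  shows "(\<Sum>i<r. (cmod (pauli_form B V W (g i) v))\<^sup>2) \<le> (\<Sum>s\<in>Pow B. (cmod (v s))\<^sup>2)"
proof -
  have "(\<Sum>i<r. (cmod (pauli_form B V W (g i) v))\<^sup>2)
      = (\<Sum>i<r. (cmod (inner_on (Pow B) (\<lambda>t. \<Sum>s\<in>Pow B. pauli_elem V W t s * v s) (g i)))\<^sup>2)"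
    by (simp add: pauli_form_eq_inner_on inner_on_commute[of "Pow B" "g _"])
  also have "\<dots> \<le> (\<Sum>t\<in>Pow B. (cmod (\<Sum>s\<in>Pow B. pauli_elem V W t s * v s))\<^sup>2)"
    by (rule bessel_inequality[OF assms(3)])
  also have "\<dots> = (\<Sum>s\<in>Pow B. (cmod (v s))\<^sup>2)"
    by (rule sum_norm_pauli_elem_mult[OF assms(1,2)])
  finally show ?thesis .
qed

lemma sum_pauli_form_mult_pauli_form:
  assumes "finite B"
  shows "(\<Sum>(V, W)\<in>Pow B \<times> Pow B. pauli_form B V W u v * pauli_form B V W u' v')
       = 2 ^ card B * inner_on (Pow B) v' u * inner_on (Pow B) v u'"
proof -
  let ?c = "\<lambda>t s t' s'. cnj (u t) * v s * cnj (u' t') * v' s'"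
  have "(\<Sum>(V, W)\<in>Pow B \<times> Pow B. pauli_form B V W u v * pauli_form B V W u' v')
      = (\<Sum>t\<in>Pow B. \<Sum>t'\<in>Pow B. \<Sum>s\<in>Pow B. \<Sum>s'\<in>Pow B. ?c t s t' s' *
          (\<Sum>(V, W)\<in>Pow B \<times> Pow B. pauli_elem V W t s * pauli_elem V W t' s'))"
    unfolding pauli_form_def sum_product
    by (simp add: sum_distrib_left sum.swap[where A="Pow B \<times> Pow B"] case_prod_unfold mult_ac)
  also have "\<dots> = (\<Sum>t\<in>Pow B. \<Sum>t'\<in>Pow B. \<Sum>s\<in>Pow B. \<Sum>s'\<in>Pow B.
      if s = t' \<and> s' = t then ?c t s t' s' * 2 ^ card B else 0)"
    using assms by (intro sum.cong refl) (auto simp: sum_pauli_elem_mult_pauli_elem)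
  also have "\<dots> = (\<Sum>t\<in>Pow B. \<Sum>t'\<in>Pow B. ?c t t' t' t * 2 ^ card B)"
    using assms by (intro sum.cong refl sum_sum_delta) auto
  also have "\<dots> = 2 ^ card B * ((\<Sum>t\<in>Pow B. v' t * cnj (u t)) * (\<Sum>t'\<in>Pow B. v t' * cnj (u' t')))"
    by (simp add: sum_product sum_distrib_left mult_ac)
  also have "\<dots> = 2 ^ card B * inner_on (Pow B) v' u * inner_on (Pow B) v u'"
    by (simp add: inner_on_def)
  finally show ?thesis .
qed

lemma sum_pauli_form_mult_pauli_form_swap:
  assumes "finite WA"
  shows "(\<Sum>(i, j)\<in>I \<times> I. pauli_form A VA WA (f i) (f j) * pauli_form A VA WA (f j) (f i))
       = of_real (\<Sum>(i, j)\<in>I \<times> I. (cmod (pauli_form A VA WA (f i) (f j)))\<^sup>2)"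
  unfolding of_real_sum case_prod_unfold
  by (intro sum.cong refl) (simp only: complex_norm_square cnj_pauli_form[OF assms])

lemma pauli_expect_Un_decomposition:
  assumes "A \<inter> B = {}" "finite A" "finite B"
    and "VA \<subseteq> A" "WA \<subseteq> A" "VB \<subseteq> B" "WB \<subseteq> B"
    and decomp: "\<forall>a\<in>Pow A. \<forall>b\<in>Pow B. psi (a \<union> b) = (\<Sum>i<r. f i a * g i b)"
  shows "pauli_expect (A \<union> B) psi (VA \<union> VB) (WA \<union> WB)
       = (\<Sum>(i, j)\<in>{..<r} \<times> {..<r}. pauli_form A VA WA (f i) (f j) * pauli_form B VB WB (g i) (g j))"
proof -
  let ?R = "{..<r} \<times> {..<r}"
  let ?X = "\<lambda>a b a' b' p. (cnj (f (fst p) a) * pauli_elem VA WA a a' * f (snd p) a') *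
                          (cnj (g (fst p) b) * pauli_elem VB WB b b' * g (snd p) b')"
  have "pauli_expect (A \<union> B) psi (VA \<union> VB) (WA \<union> WB)
      = (\<Sum>a\<in>Pow A. \<Sum>b\<in>Pow B. \<Sum>a'\<in>Pow A. \<Sum>b'\<in>Pow B. \<Sum>p\<in>?R. ?X a b a' b' p)"
    unfolding pauli_expect_def sum_Pow_Un[OF assms(1)]
  proof (intro sum.cong refl)
    fix a b a' b' assume "a \<in> Pow A" "b \<in> Pow B" "a' \<in> Pow A" "b' \<in> Pow B"
    with assms show "cnj (psi (a \<union> b)) * pauli_elem (VA \<union> VB) (WA \<union> WB) (a \<union> b) (a' \<union> b') *
        psi (a' \<union> b') = (\<Sum>p\<in>?R. ?X a b a' b' p)"
      by (simp add: pauli_elem_Un sum_product sum.cartesian_product sum_distrib_left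
          sum_distrib_right case_prod_unfold mult_ac)
  qed
  also have "\<dots> = (\<Sum>p\<in>?R. \<Sum>a\<in>Pow A. \<Sum>b\<in>Pow B. \<Sum>a'\<in>Pow A. \<Sum>b'\<in>Pow B. ?X a b a' b' p)"
    by (simp only: sum.swap[where B="?R"])
  also have "\<dots> = (\<Sum>(i, j)\<in>?R. pauli_form A VA WA (f i) (f j) * pauli_form B VB WB (g i) (g j))"
    unfolding pauli_form_def sum_product case_prod_unfold by (simp add: mult_ac)
  finally show ?thesis .
qed

section \<open>Pauli expectations in an orthonormal Schmidt decomposition\<close>

context
  fixes n :: nat and A :: "nat set" and psi :: qstate
    and r :: nat and f g :: "nat \<Rightarrow> nat set \<Rightarrow> complex"
  assumes A_subset: "A \<subseteq> {..<n}"
    and decomp: "\<forall>a\<in>Pow A. \<forall>b\<in>Pow ({..<n} - A). psi (a \<union> b) = (\<Sum>i<r. f i a * g i b)"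
    and orthonormal: "orthonormal_on (Pow ({..<n} - A)) r g"
begin

lemma reduced_state_decomposition:
  assumes "a \<in> Pow A" "a' \<in> Pow A"
  shows "reduced_state n A psi a a' = (\<Sum>i<r. f i a * cnj (f i a'))"
proof -
  let ?B = "Pow ({..<n} - A)"
  have "reduced_state n A psi a a'
      = inner_on ?B (\<lambda>b. \<Sum>i<r. f i a * g i b) (\<lambda>b. \<Sum>j<r. f j a' * g j b)"
    unfolding reduced_state_def inner_on_def using assms decomp by (intro sum.cong) auto
  also have "\<dots> = (\<Sum>i<r. f i a * (\<Sum>j<r. cnj (f j a') * inner_on ?B (g i) (g j)))"
    by (simp add: inner_on_sum_left inner_on_sum_right)
  also have "\<dots> = (\<Sum>i<r. f i a * cnj (f i a'))"
    by (intro sum.cong refl) (simp add: orthonormal_on_sum_inner_right[OF orthonormal])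
  finally show ?thesis .
qed

lemma tr_rPrP_decomposition:
  "tr_rPrP n A psi VA WA
     = (\<Sum>(i, j)\<in>{..<r} \<times> {..<r}. pauli_form A VA WA (f i) (f j) * pauli_form A VA WA (f j) (f i))"
proof -
  let ?R = "{..<r} \<times> {..<r}" and ?P = "pauli_elem VA WA"
  let ?X = "\<lambda>a1 a2 a3 a4 p. (cnj (f (snd p) a4) * ?P a4 a1 * f (fst p) a1) *
                            (cnj (f (fst p) a2) * ?P a2 a3 * f (snd p) a3)"
  have "tr_rPrP n A psi VA WA
      = (\<Sum>a1\<in>Pow A. \<Sum>a2\<in>Pow A. \<Sum>a3\<in>Pow A. \<Sum>a4\<in>Pow A. \<Sum>p\<in>?R. ?X a1 a2 a3 a4 p)"
    unfolding tr_rPrP_def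
    by (intro sum.cong refl) (simp add: reduced_state_decomposition sum_product
        sum.cartesian_product sum_distrib_left sum_distrib_right case_prod_unfold mult_ac)
  also have "\<dots> = (\<Sum>p\<in>?R. \<Sum>a1\<in>Pow A. \<Sum>a2\<in>Pow A. \<Sum>a3\<in>Pow A. \<Sum>a4\<in>Pow A. ?X a1 a2 a3 a4 p)"
    by (simp only: sum.swap[where B="?R"])
  (* the nesting a4, a2, a1, a3 is the one sum_product produces for M j i * M i j *)
  also have "\<dots> = (\<Sum>p\<in>?R. \<Sum>a4\<in>Pow A. \<Sum>a2\<in>Pow A. \<Sum>a1\<in>Pow A. \<Sum>a3\<in>Pow A. ?X a1 a2 a3 a4 p)"
  proof (rule sum.cong[OF refl])
    fix p
    have "(\<Sum>a1\<in>Pow A. \<Sum>a2\<in>Pow A. \<Sum>a3\<in>Pow A. \<Sum>a4\<in>Pow A. ?X a1 a2 a3 a4 p)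
        = (\<Sum>a2\<in>Pow A. \<Sum>a1\<in>Pow A. \<Sum>a4\<in>Pow A. \<Sum>a3\<in>Pow A. ?X a1 a2 a3 a4 p)"
      by (subst sum.swap) (intro sum.cong refl sum.swap)
    also have "\<dots> = (\<Sum>a2\<in>Pow A. \<Sum>a4\<in>Pow A. \<Sum>a1\<in>Pow A. \<Sum>a3\<in>Pow A. ?X a1 a2 a3 a4 p)"
      by (intro sum.cong refl sum.swap)
    also have "\<dots> = (\<Sum>a4\<in>Pow A. \<Sum>a2\<in>Pow A. \<Sum>a1\<in>Pow A. \<Sum>a3\<in>Pow A. ?X a1 a2 a3 a4 p)"
      by (rule sum.swap)
    finally show "(\<Sum>a1\<in>Pow A. \<Sum>a2\<in>Pow A. \<Sum>a3\<in>Pow A. \<Sum>a4\<in>Pow A. ?X a1 a2 a3 a4 p)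
        = (\<Sum>a4\<in>Pow A. \<Sum>a2\<in>Pow A. \<Sum>a1\<in>Pow A. \<Sum>a3\<in>Pow A. ?X a1 a2 a3 a4 p)" .
  qed
  also have "\<dots> = (\<Sum>(i, j)\<in>?R. pauli_form A VA WA (f j) (f i) * pauli_form A VA WA (f i) (f j))"
    unfolding pauli_form_def sum_product case_prod_unfold by (simp add: mult_ac)
  finally show ?thesis by (simp add: mult.commute)
qed

lemma tr_rPrP_eq_sum_norm:
  assumes "WA \<subseteq> A"
  shows "tr_rPrP n A psi VA WA
       = of_real (\<Sum>(i, j)\<in>{..<r} \<times> {..<r}. (cmod (pauli_form A VA WA (f i) (f j)))\<^sup>2)"
proof -
  have "finite WA" using assms A_subset by (meson finite_lessThan finite_subset)
  then show ?thesis unfolding tr_rPrP_decomposition by (rule sum_pauli_form_mult_pauli_form_swap)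
qed

lemma pauli_expect_decomposition:
  assumes "VA \<subseteq> A" "WA \<subseteq> A" "VB \<subseteq> {..<n} - A" "WB \<subseteq> {..<n} - A"
  shows "pauli_expect {..<n} psi (VA \<union> VB) (WA \<union> WB)
       = (\<Sum>(i, j)\<in>{..<r} \<times> {..<r}.
            pauli_form A VA WA (f i) (f j) * pauli_form ({..<n} - A) VB WB (g i) (g j))"
proof -
  have "A \<union> ({..<n} - A) = {..<n}" using A_subset by blast
  moreover have "finite A" using A_subset finite_subset by blast
  ultimately show ?thesis
    using pauli_expect_Un_decomposition[of A "{..<n} - A"] assms decomp by simp
qed

lemma sum_pauli_expect_squared:
  assumes "VA \<subseteq> A" "WA \<subseteq> A"
  shows "(\<Sum>(VB, WB)\<in>Pow ({..<n} - A) \<times> Pow ({..<n} - A).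
            (pauli_expect {..<n} psi (VA \<union> VB) (WA \<union> WB))\<^sup>2)
       = 2 ^ card ({..<n} - A) * tr_rPrP n A psi VA WA"
proof -
  let ?B = "{..<n} - A" and ?R = "{..<r} \<times> {..<r}"
  let ?M = "\<lambda>p. pauli_form A VA WA (f (fst p)) (f (snd p))"
  let ?N = "\<lambda>x p. pauli_form ?B (fst x) (snd x) (g (fst p)) (g (snd p))"
  have square: "(pauli_expect {..<n} psi (VA \<union> fst x) (WA \<union> snd x))\<^sup>2
      = (\<Sum>p\<in>?R. \<Sum>q\<in>?R. ?M p * ?M q * (?N x p * ?N x q))"
    if "x \<in> Pow ?B \<times> Pow ?B" for x
    using that assms by (auto simp: pauli_expect_decomposition power2_eq_square sum_product
        case_prod_unfold mult_ac)
  have complete: "(\<Sum>x\<in>Pow ?B \<times> Pow ?B. ?N x p * ?N x q)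
      = (if q = prod.swap p then 2 ^ card ?B else 0)"
    if "p \<in> ?R" "q \<in> ?R" for p q
    using sum_pauli_form_mult_pauli_form[of ?B] that orthonormal unfolding orthonormal_on_def
    by (auto simp: case_prod_unfold prod_eq_iff)
  have "(\<Sum>x\<in>Pow ?B \<times> Pow ?B. (pauli_expect {..<n} psi (VA \<union> fst x) (WA \<union> snd x))\<^sup>2)
      = (\<Sum>p\<in>?R. \<Sum>q\<in>?R. ?M p * ?M q * (\<Sum>x\<in>Pow ?B \<times> Pow ?B. ?N x p * ?N x q))"
    by (simp add: square sum_distrib_left sum.swap[where A="Pow ?B \<times> Pow ?B"] cong: sum.cong)
  also have "\<dots> = (\<Sum>p\<in>?R. \<Sum>q\<in>?R. if q = prod.swap p then 2 ^ card ?B * (?M p * ?M q) else 0)"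
    by (intro sum.cong refl) (simp add: complete)
  also have "\<dots> = 2 ^ card ?B * (\<Sum>p\<in>?R. ?M p * ?M (prod.swap p))"
    by (simp add: sum_distrib_left mem_Times_iff)
  also have "\<dots> = 2 ^ card ?B * tr_rPrP n A psi VA WA"
    by (simp add: tr_rPrP_decomposition case_prod_unfold)
  finally show ?thesis by (simp add: case_prod_unfold)
qed

lemma tr_rPrP_nonneg:
  assumes "WA \<subseteq> A"
  shows "0 \<le> Re (tr_rPrP n A psi VA WA)"
  unfolding tr_rPrP_eq_sum_norm[OF assms] by (simp add: sum_nonneg case_prod_unfold)

lemma norm_pauli_expect_squared_le:
  assumes "VA \<subseteq> A" "WA \<subseteq> A" "VB \<subseteq> {..<n} - A" "WB \<subseteq> {..<n} - A"
  shows "(cmod (pauli_expect {..<n} psi (VA \<union> VB) (WA \<union> WB)))\<^sup>2 \<le> r * Re (tr_rPrP n A psi VA WA)"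
proof -
  let ?B = "{..<n} - A" and ?R = "{..<r} \<times> {..<r}"
  let ?M = "\<lambda>p. pauli_form A VA WA (f (fst p)) (f (snd p))"
  let ?N = "\<lambda>p. pauli_form ?B VB WB (g (fst p)) (g (snd p))"
  have "(\<Sum>p\<in>?R. (cmod (?N p))\<^sup>2) = (\<Sum>j<r. \<Sum>i<r. (cmod (pauli_form ?B VB WB (g i) (g j)))\<^sup>2)"
    unfolding sum.cartesian_product' by simp (rule sum.swap)
  also have "\<dots> \<le> (\<Sum>j<r. \<Sum>b\<in>Pow ?B. (cmod (g j b))\<^sup>2)"
    using assms(3) orthonormal by (intro sum_mono sum_norm_pauli_form_le) auto
  also have "\<dots> = r"
    by (simp add: orthonormal_on_sum_norm[OF orthonormal])
  finally have N_bound: "(\<Sum>p\<in>?R. (cmod (?N p))\<^sup>2) \<le> r" .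
  have "(cmod (pauli_expect {..<n} psi (VA \<union> VB) (WA \<union> WB)))\<^sup>2 = (cmod (\<Sum>p\<in>?R. ?M p * ?N p))\<^sup>2"
    using assms by (simp add: pauli_expect_decomposition case_prod_unfold)
  also have "\<dots> \<le> (\<Sum>p\<in>?R. (cmod (?M p))\<^sup>2) * (\<Sum>p\<in>?R. (cmod (?N p))\<^sup>2)"
    by (rule cmod_sum_mult_squared_le)
  also have "\<dots> \<le> Re (tr_rPrP n A psi VA WA) * r"
    using N_bound by (intro mult_mono) (simp_all add: tr_rPrP_eq_sum_norm[OF assms(2)] case_prod_unfold sum_nonneg)
  finally show ?thesis by (simp add: mult.commute)
qed

lemma Re_pauli_expect_squared_le:
  assumes "V \<subseteq> {..<n}" "W \<subseteq> {..<n}"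
  shows "(Re (pauli_expect {..<n} psi V W))\<^sup>2 \<le> r * Re (tr_rPrP n A psi (V \<inter> A) (W \<inter> A))"
proof -
  have "V = (V \<inter> A) \<union> (V - A)" "W = (W \<inter> A) \<union> (W - A)" by blast+
  then have "(cmod (pauli_expect {..<n} psi V W))\<^sup>2 \<le> r * Re (tr_rPrP n A psi (V \<inter> A) (W \<inter> A))"
    using norm_pauli_expect_squared_le[of "V \<inter> A" "W \<inter> A" "V - A" "W - A"] assms by auto
  moreover have "\<bar>Re (pauli_expect {..<n} psi V W)\<bar> \<le> \<bar>cmod (pauli_expect {..<n} psi V W)\<bar>"
    using abs_Re_le_cmod by simp
  then have "(Re (pauli_expect {..<n} psi V W))\<^sup>2 \<le> (cmod (pauli_expect {..<n} psi V W))\<^sup>2"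
    by (simp only: abs_le_square_iff)
  ultimately show ?thesis by linarith
qed

lemma pauli_marginal_eq_tr_rPrP:
  assumes "VA \<subseteq> A" "WA \<subseteq> A"
  shows "pauli_marginal n A psi VA WA = Re (tr_rPrP n A psi VA WA) / 2 ^ card A"
proof -
  let ?B = "{..<n} - A"
  let ?E = "\<lambda>(VB, WB). pauli_expect {..<n} psi (VA \<union> VB) (WA \<union> WB)"
  have "(Re (?E x))\<^sup>2 = Re ((?E x)\<^sup>2)" if "x \<in> Pow ?B \<times> Pow ?B" for x
  proof -
    have "WA \<union> snd x \<subseteq> {..<n}" using that assms(2) A_subset by auto
    then have "finite (WA \<union> snd x)" by (rule finite_subset) simp
    then have "?E x \<in> \<real>" by (simp add: case_prod_unfold pauli_expect_real)
    then show ?thesis by (auto elim: Reals_cases)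
  qed
  then have "pauli_marginal n A psi VA WA = Re (\<Sum>x\<in>Pow ?B \<times> Pow ?B. (?E x)\<^sup>2) / 2 ^ n"
    unfolding pauli_marginal_def pauli_dist_def Re_sum
    by (simp add: sum_divide_distrib case_prod_unfold cong: sum.cong)
  also have "\<dots> = 2 ^ card ?B * Re (tr_rPrP n A psi VA WA) / (2 ^ card A * 2 ^ card ?B)"
  proof -
    have "card A + card ?B = n"
      using A_subset card_mono[OF finite_lessThan A_subset] by (simp add: card_Diff_subset finite_subset)
    then show ?thesis using sum_pauli_expect_squared[OF assms]
      by (simp add: case_prod_unfold flip: power_add)
  qed
  finally show ?thesis by simp
qed

end

theorem lemma1:
  fixes n :: nat and A V W :: "nat set" and psi :: qstate
  assumes "A \<subseteq> {..<n}" and "V \<subseteq> {..<n}" and "W \<subseteq> {..<n}"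
    and "(\<Sum>s\<in>Pow {..<n}. (cmod (psi s))\<^sup>2) = 1"
  shows "pauli_marginal n A psi (V \<inter> A) (W \<inter> A)
           = Re (tr_rPrP n A psi (V \<inter> A) (W \<inter> A)) / 2 ^ card A
       \<and> Re (tr_rPrP n A psi (V \<inter> A) (W \<inter> A)) / 2 ^ card A
           \<ge> (Re (pauli_expect {..<n} psi V W))\<^sup>2 / (2 ^ card A * real (schmidt_rank n A psi))"
proof -
  obtain r f g where rank: "r \<le> schmidt_rank n A psi"
    and orthonormal: "orthonormal_on (Pow ({..<n} - A)) r g"
    and decomp: "\<forall>a\<in>Pow A. \<forall>b\<in>Pow ({..<n} - A). psi (a \<union> b) = (\<Sum>i<r. f i a * g i b)"
    using schmidt_rank_orthonormal_decomposition[OF assms(1)] .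
  note decomposition = assms(1) decomp orthonormal
  have "pauli_marginal n A psi (V \<inter> A) (W \<inter> A) = Re (tr_rPrP n A psi (V \<inter> A) (W \<inter> A)) / 2 ^ card A"
    by (rule pauli_marginal_eq_tr_rPrP[OF decomposition]) auto
  moreover have "(Re (pauli_expect {..<n} psi V W))\<^sup>2 \<le> r * Re (tr_rPrP n A psi (V \<inter> A) (W \<inter> A))"
    by (rule Re_pauli_expect_squared_le[OF decomposition assms(2,3)])
  moreover have "0 \<le> Re (tr_rPrP n A psi (V \<inter> A) (W \<inter> A))"
    by (rule tr_rPrP_nonneg[OF decomposition]) auto
  ultimately show ?thesis
    using rank by (simp add: divide_mult_le_divide)
qed

end
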